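(* Assume $p\ge2$, $q\ge2$, $p+q$ even, $m\in\mathbb N$ and $m+3\le\frac{p+q}2$. Let $\hat\Xi=\pi(\gamma_2(\Xi))$. Then for every $K$-homogeneous $f\in M^{+}(m)$ or $f\in M^{-}(m)$ with $K$-type $(\kappa_+,\kappa_-)$ one has $\hat\Xi f=\lambda f$ with $$\lambda=(\kappa_+-\kappa_-)(\kappa_++\kappa_--2)-\frac{p-q}{p+q}\,m(m+2).$$ In particular $\lambda=0$ if $m=0$.
   Context: Let $n=p+q$, $I_{p,q}=\mathrm{diag}(1_p,-1_q)$, $\mathfrak g=\{X\in\mathfrak{gl}_n(\mathbb C):{}^tXI_{p,q}+I_{p,q}X=0\}$, $\mathfrak o_n=\{X:{}^tX+X=0\}$, $[p]=\{1,\dots,p\}$, $p+[q]=\{p+1,\dots,n\}$, $\epsilon_i=1$ for $i\in[p]$ and $-1$ otherwise, $X_{i,j}=\epsilon_jE_{i,j}-\epsilon_iE_{j,i}$, $M_{i,j}=E_{i,j}-E_{j,i}$. $\Phi:\mathfrak g\to\mathfrak o_n$, $X\mapsto I_{p,q}^{1/2}XI_{p,q}^{-1/2}$ with $I_{p,q}^{1/2}=\mathrm{diag}(1,\dots,1,\sqrt{-1},\dots,\sqrt{-1})$, extended to tensors. $S^2$ is identified with symmetric 2-tensors and $\gamma_2:S^2(\mathfrak g)\to U(\mathfrak g)$ is the restriction of $a\otimes b\mapsto ab$. With $Q^\natural=\sum_{i,k}M_{i,k}\otimes M_{k,i}$ and $S^\natural_{ij}=\frac12\sum_k(M_{i,k}\otimes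 M_{k,j}+M_{k,j}\otimes M_{i,k})-\frac1n\delta_{ij}Q^\natural$, set $\Xi=\Phi^{-1}\big(\frac12(\sum_{i\in[p]}S^\natural_{ii}-\sum_{i\in p+[q]}S^\natural_{ii})\big)$. $K=\mathrm O(p)\times\mathrm O(q)$. On $V=\mathbb R^{p+q}$ with coordinates $(x_1,\dots,x_p,y_1,\dots,y_q)$ let $\mathcal H^k(\mathbb R^p)$, $\mathcal H^l(\mathbb R^q)$ be homogeneous harmonic polynomials of degrees $k,l$, $r_x^2=\sum x_i^2$, $r_y^2=\sum y_j^2$, and $\mathcal E=\bigoplus_{k,l\ge0}\mathcal H^k(\mathbb R^p)\otimes\mathcal H^l(\mathbb R^q)\otimes\mathbb C[[r_x^2,r_y^2]]$. The representation $\pi$ of $U(\mathfrak g)$ on $\mathcal E$ is given (with $i'=i-p$) by $\pi(X_{i,j})=x_i\partial_{x_j}-x_j\partial_{x_i}$ ($i,j\in[p]$), $-y_{i'}\partial_{y_{j'}}+y_{j'}\partial_{y_{i'}}$ ($i,j\in p+[q]$), $-\sqrt{-1}(x_iy_{j'}+\partial_{x_i}\partial_{y_{j'}})$ ($i\in[p],j\in p+[q]$), $\sqrt{-1}(x_jy_{i'}+\partial_{x_j}\partial_{y_{i'}})$ ($i\in p+[q],j\in[p]$). With $E_x=\sum x_i\partial_{x_i}$, $E_y=\sum y_j\partial_{y_j}$, $\Delta_x=\sum\partial_{x_i}^2$, $\Delta_y=\sum\partial_{y_j}^2$: $H=-E_x-\frac p2+E_y+\frac q2$, $X^+=-\frac12(\Delta_x+r_y^2)$,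 $X^-=\frac12(r_x^2+\Delta_y)$, $M^+(m)=\{f\in\mathcal E:Hf=mf,X^+f=0,(X^-)^{m+1}f=0\}$, $M^-(m)=\{f\in\mathcal E:Hf=-mf,X^-f=0,(X^+)^{m+1}f=0\}$. An element $h_1(x)h_2(y)\phi(r_x^2,r_y^2)$ with $h_1\in\mathcal H^k(\mathbb R^p)$, $h_2\in\mathcal H^l(\mathbb R^q)$ has $K$-type $(k+\frac p2,l+\frac q2)$; an element is $K$-homogeneous with $K$-type $(\kappa_+,\kappa_-)$ if it is a linear combination of such elements all of $K$-type $(\kappa_+,\kappa_-)$. *)

theory Defs
  imports Complex_Main "HOL-Library.Function_Algebras"
begin

text \<open>Variables are indexed by natural numbers: index i < p is x_(i+1), index p <= i < p+q
  is y_(i-p+1).\<close>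

type_synonym mon = "nat \<Rightarrow> nat"
type_synonym ser = "mon \<Rightarrow> complex"

definition smul :: "complex \<Rightarrow> ser \<Rightarrow> ser" where
  "smul c f = (\<lambda>\<alpha>. c * f \<alpha>)"

definition ser_mult :: "ser \<Rightarrow> ser \<Rightarrow> ser" where
  "ser_mult f g = (\<lambda>\<alpha>. \<Sum>\<beta>\<in>{\<beta>. \<forall>i. \<beta> i \<le> \<alpha> i}. f \<beta> * g (\<lambda>i. \<alpha> i - \<beta> i))"

definition ser_one :: ser where
  "ser_one = (\<lambda>\<alpha>. if \<alpha> = (\<lambda>_. 0) then 1 else 0)"

primrec ser_pow :: "ser \<Rightarrow> nat \<Rightarrow> ser" where
  "ser_pow f 0 = ser_one"
| "ser_pow f (Suc k) = ser_mult f (ser_pow f k)"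

definition unitmon :: "nat \<Rightarrow> mon" where
  "unitmon i = (\<lambda>j. if j = i then 1 else 0)"

definition ser_var :: "nat \<Rightarrow> ser" where
  "ser_var i = (\<lambda>\<alpha>. if \<alpha> = unitmon i then 1 else 0)"

definition mulvar :: "nat \<Rightarrow> ser \<Rightarrow> ser" where
  "mulvar i f = (\<lambda>\<alpha>. if 0 < \<alpha> i then f (\<alpha>(i := \<alpha> i - 1)) else 0)"

definition dvar :: "nat \<Rightarrow> ser \<Rightarrow> ser" where
  "dvar i f = (\<lambda>\<alpha>. of_nat (Suc (\<alpha> i)) * f (\<alpha>(i := Suc (\<alpha> i))))"

definition Lap_x :: "nat \<Rightarrow> ser \<Rightarrow> ser" where
  "Lap_x p f = (\<Sum>i<p. dvar i (dvar i f))"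

definition Lap_y :: "nat \<Rightarrow> nat \<Rightarrow> ser \<Rightarrow> ser" where
  "Lap_y p q f = (\<Sum>i\<in>{p..<p+q}. dvar i (dvar i f))"

definition Eul_x :: "nat \<Rightarrow> ser \<Rightarrow> ser" where
  "Eul_x p f = (\<Sum>i<p. mulvar i (dvar i f))"

definition Eul_y :: "nat \<Rightarrow> nat \<Rightarrow> ser \<Rightarrow> ser" where
  "Eul_y p q f = (\<Sum>i\<in>{p..<p+q}. mulvar i (dvar i f))"

definition rx2 :: "nat \<Rightarrow> ser" where
  "rx2 p = (\<Sum>i<p. mulvar i (ser_var i))"

definition ry2 :: "nat \<Rightarrow> nat \<Rightarrow> ser" where
  "ry2 p q = (\<Sum>i\<in>{p..<p+q}. mulvar i (ser_var i))"

definition harm_x :: "nat \<Rightarrow> nat \<Rightarrow> ser \<Rightarrow> bool" where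
  "harm_x p k h \<longleftrightarrow>
     (\<forall>\<alpha>. h \<alpha> \<noteq> 0 \<longrightarrow> (\<forall>j. p \<le> j \<longrightarrow> \<alpha> j = 0) \<and> (\<Sum>i<p. \<alpha> i) = k)
     \<and> Lap_x p h = 0"

definition harm_y :: "nat \<Rightarrow> nat \<Rightarrow> nat \<Rightarrow> ser \<Rightarrow> bool" where
  "harm_y p q l h \<longleftrightarrow>
     (\<forall>\<alpha>. h \<alpha> \<noteq> 0 \<longrightarrow> (\<forall>j. (j < p \<or> p + q \<le> j) \<longrightarrow> \<alpha> j = 0)
                       \<and> (\<Sum>i\<in>{p..<p+q}. \<alpha> i) = l)
     \<and> Lap_y p q h = 0"

text \<open>phi(u, v) for phi in C[[s,t]] (coefficient function c) and series u, v without
  constant term (here u = r_x^2, v = r_y^2, homogeneous of degree 2, in the first n variables)\<close>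
definition subst2 :: "nat \<Rightarrow> (nat \<times> nat \<Rightarrow> complex) \<Rightarrow> ser \<Rightarrow> ser \<Rightarrow> ser" where
  "subst2 n c u v = (\<lambda>\<alpha>. \<Sum>a\<le>(\<Sum>i<n. \<alpha> i). \<Sum>b\<le>(\<Sum>i<n. \<alpha> i).
        c (a, b) * ser_mult (ser_pow u a) (ser_pow v b) \<alpha>)"

definition elem :: "nat \<Rightarrow> nat \<Rightarrow> ser \<Rightarrow> ser \<Rightarrow> (nat \<times> nat \<Rightarrow> complex) \<Rightarrow> ser" where
  "elem p q h1 h2 c = ser_mult (ser_mult h1 h2) (subst2 (p + q) c (rx2 p) (ry2 p q))"

definition Espace :: "nat \<Rightarrow> nat \<Rightarrow> ser set" where
  "Espace p q = {f. \<exists>(N::nat) ks ls h1 h2 c.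
      f = (\<Sum>i<N. elem p q (h1 i) (h2 i) (c i))
      \<and> (\<forall>i<N. harm_x p (ks i) (h1 i) \<and> harm_y p q (ls i) (h2 i))}"

definition K_homog :: "nat \<Rightarrow> nat \<Rightarrow> real \<Rightarrow> real \<Rightarrow> ser \<Rightarrow> bool" where
  "K_homog p q kp km f \<longleftrightarrow> (\<exists>k l (N::nat) h1 h2 c.
      real k + real p / 2 = kp \<and> real l + real q / 2 = km
      \<and> f = (\<Sum>i<N. elem p q (h1 i) (h2 i) (c i))
      \<and> (\<forall>i<N. harm_x p k (h1 i) \<and> harm_y p q l (h2 i)))"

definition Hop :: "nat \<Rightarrow> nat \<Rightarrow> ser \<Rightarrow> ser" where
  "Hop p q f = - Eul_x p f + Eul_y p q f
                + smul (complex_of_real ((real q - real p) / 2)) f"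

definition Xplus :: "nat \<Rightarrow> nat \<Rightarrow> ser \<Rightarrow> ser" where
  "Xplus p q f = smul (-1/2) (Lap_x p f + ser_mult (ry2 p q) f)"

definition Xminus :: "nat \<Rightarrow> nat \<Rightarrow> ser \<Rightarrow> ser" where
  "Xminus p q f = smul (1/2) (ser_mult (rx2 p) f + Lap_y p q f)"

definition Mplus :: "nat \<Rightarrow> nat \<Rightarrow> nat \<Rightarrow> ser set" where
  "Mplus p q m = {f \<in> Espace p q. Hop p q f = smul (of_nat m) f \<and> Xplus p q f = 0
                     \<and> (Xminus p q ^^ Suc m) f = 0}"

definition Mminus :: "nat \<Rightarrow> nat \<Rightarrow> nat \<Rightarrow> ser set" where
  "Mminus p q m = {f \<in> Espace p q. Hop p q f = smul (- of_nat m) f \<and> Xminus p q f = 0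
                     \<and> (Xplus p q ^^ Suc m) f = 0}"

section \<open>The representation pi on the basis X_{i,j} (0-based indices)\<close>

definition pi_X :: "nat \<Rightarrow> nat \<Rightarrow> nat \<Rightarrow> ser \<Rightarrow> ser" where
  "pi_X p i j f =
     (if i < p \<and> j < p then mulvar i (dvar j f) - mulvar j (dvar i f)
      else if p \<le> i \<and> p \<le> j then - mulvar i (dvar j f) + mulvar j (dvar i f)
      else if i < p then smul (- \<i>) (mulvar i (mulvar j f) + dvar i (dvar j f))
      else smul \<i> (mulvar j (mulvar i f) + dvar j (dvar i f)))"

definition eps :: "nat \<Rightarrow> nat \<Rightarrow> complex" where
  "eps p i = (if i < p then 1 else -1)"

section \<open>2-tensors in gl_n (x) gl_n, as coefficients w.r.t. E_{a,b} (x) E_{c,d}\<close>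

type_synonym tens = "nat \<Rightarrow> nat \<Rightarrow> nat \<Rightarrow> nat \<Rightarrow> complex"
type_synonym mat = "nat \<Rightarrow> nat \<Rightarrow> complex"

definition tp :: "mat \<Rightarrow> mat \<Rightarrow> tens" where
  "tp A B = (\<lambda>a b c d. A a b * B c d)"

definition Mmat :: "nat \<Rightarrow> nat \<Rightarrow> mat" where
  "Mmat i k = (\<lambda>a b. (if a = i \<and> b = k then 1 else 0) - (if a = k \<and> b = i then 1 else 0))"

definition Qnat :: "nat \<Rightarrow> tens" where
  "Qnat n = (\<Sum>i<n. \<Sum>k<n. tp (Mmat i k) (Mmat k i))"

definition Snat :: "nat \<Rightarrow> nat \<Rightarrow> nat \<Rightarrow> tens" where
  "Snat n i j = (\<lambda>a b c d.
      (1/2) * (\<Sum>k<n. tp (Mmat i k) (Mmat k j) a b c d + tp (Mmat k j) (Mmat i k) a b c d)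
      - (if i = j then 1 / of_nat n else 0) * Qnat n a b c d)"

text \<open>diagonal entries of I_{p,q}^{1/2}\<close>
definition sq :: "nat \<Rightarrow> nat \<Rightarrow> complex" where
  "sq p a = (if a < p then 1 else \<i>)"

text \<open>Phi^{-1}(Y) = I^{-1/2} Y I^{1/2}, extended to tensors as Phi^{-1} (x) Phi^{-1}\<close>
definition Phi_inv_tens :: "nat \<Rightarrow> tens \<Rightarrow> tens" where
  "Phi_inv_tens p T = (\<lambda>a b c d. (sq p b / sq p a) * (sq p d / sq p c) * T a b c d)"

definition Xi :: "nat \<Rightarrow> nat \<Rightarrow> tens" where
  "Xi p q = Phi_inv_tens p (\<lambda>a b c d. (1/2) *
      ((\<Sum>i<p. Snat (p+q) i i a b c d) - (\<Sum>i\<in>{p..<p+q}. Snat (p+q) i i a b c d)))"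

text \<open>The coordinate of X_{i,j} (i<j) of an
  element Y of g is eps_j * Y_{i,j}; hence T = sum eps_j eps_l T(i,j,k,l) X_{i,j} (x) X_{k,l},
  and gamma_2 followed by pi sends X_{i,j} (x) X_{k,l} to pi(X_{i,j}) o pi(X_{k,l}).\<close>
definition pi_gamma2 :: "nat \<Rightarrow> nat \<Rightarrow> tens \<Rightarrow> ser \<Rightarrow> ser" where
  "pi_gamma2 p q T f = (\<Sum>i<p+q. \<Sum>j\<in>{i<..<p+q}. \<Sum>k<p+q. \<Sum>l\<in>{k<..<p+q}.
       smul (eps p j * eps p l * T i j k l) (pi_X p i j (pi_X p k l f)))"

definition Xihat :: "nat \<Rightarrow> nat \<Rightarrow> ser \<Rightarrow> ser" where
  "Xihat p q = pi_gamma2 p q (Xi p q)"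

end

theory Submission
  imports Defs "HOL-Library.FuncSet"
begin

text \<open>
  In this Fock model \<open>\<pi>(X\<^sub>i\<^sub>,\<^sub>j)\<close> is, up to sign, the angular momentum \<open>x\<^sub>i\<partial>\<^sub>j - x\<^sub>j\<partial>\<^sub>i\<close>
  when \<open>i, j\<close> lie in the same block, and \<open>\<i>(x\<^sub>iy\<^sub>j + \<partial>\<^sub>i\<partial>\<^sub>j)\<close> otherwise. The tensor
  \<open>\<Xi>\<close> is diagonal in the basis \<open>X\<^sub>i\<^sub>,\<^sub>j \<otimes> X\<^sub>k\<^sub>,\<^sub>l\<close>, and with \<open>r = (p - q)/(p + q)\<close> one finds
  \<open>\<pi>(\<gamma>\<^sub>2(\<Xi>)) = (r - 1) C\<^sub>x + (r + 1) C\<^sub>y + r M = C\<^sub>y - C\<^sub>x + r (M + C\<^sub>x + C\<^sub>y)\<close>, where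
  \<open>C\<^sub>x\<close>, \<open>C\<^sub>y\<close> are the Casimir operators of \<open>o(p)\<close>, \<open>o(q)\<close> and \<open>M\<close> is, up to sign, the sum of
  the squares of the mixed generators.

  The angular momenta of one block only see the harmonic factor of that block in
  \<open>h\<^sub>1(x) h\<^sub>2(y) \<phi>(r\<^sub>x\<^sup>2, r\<^sub>y\<^sup>2)\<close>, so \<open>C\<^sub>x\<close> and \<open>C\<^sub>y\<close> act on a \<open>K\<close>-homogeneous \<open>f\<close> by
  \<open>-k(k + p - 2)\<close> and \<open>-l(l + q - 2)\<close>. Written with Euler operators, \<open>M + C\<^sub>x + C\<^sub>y\<close> is a
  constant minus the Casimir of the \<open>sl\<^sub>2\<close>-triple \<open>H, X\<^sup>+, X\<^sup>-\<close>, and that Casimir acts by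
  \<open>m(m + 2)\<close> on \<open>M\<^sup>+(m)\<close> and on \<open>M\<^sup>-(m)\<close>. For \<open>m = 0\<close> both \<open>X\<^sup>+\<close> and \<open>X\<^sup>-\<close> kill \<open>f\<close>;
  then \<open>C\<^sub>y - C\<^sub>x\<close> is determined by the Euler operators alone, and its value is exactly the
  condition \<open>\<lambda> = 0\<close>.
\<close>

section \<open>Formal power series\<close>

lemma sum_fun_apply: "(\<Sum>i\<in>A. F i) x = (\<Sum>i\<in>A. F i x)"
  for F :: "'a \<Rightarrow> 'b \<Rightarrow> 'c::comm_monoid_add"
  by (induction A rule: infinite_finite_induct) auto

lemma smul_apply [simp]: "smul c f \<alpha> = c * f \<alpha>"
  by (simp add: smul_def)

lemma smul_simps [simp]:
  "smul c (f + g) = smul c f + smul c g"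
  "smul c (f - g) = smul c f - smul c g"
  "smul c (- f) = - smul c f"
  "smul c 0 = 0"
  "smul 0 f = 0"
  "smul 1 f = f"
  "smul c (smul d f) = smul (c * d) f"
  by (auto simp: fun_eq_iff algebra_simps)

lemma smul_two: "smul 2 f = f + f"
  by (simp add: fun_eq_iff)

lemma smul_sum: "smul c (\<Sum>j\<in>A. F j) = (\<Sum>j\<in>A. smul c (F j))"
  by (simp add: fun_eq_iff sum_fun_apply sum_distrib_left)

lemma sum_const_ser: "(\<Sum>j\<in>A. f) = smul (of_nat (card A)) f"
  by (simp add: fun_eq_iff sum_fun_apply)

lemma smul_eq_0_iff: "smul c g = 0 \<longleftrightarrow> c = 0 \<or> g = 0"
  by (auto simp: fun_eq_iff)

lemma smul_right_cancel: "smul a f = smul b f \<Longrightarrow> f \<noteq> 0 \<Longrightarrow> a = b"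
  by (auto simp: fun_eq_iff)

lemma mulvar_simps [simp]:
  "mulvar i (f + g) = mulvar i f + mulvar i g"
  "mulvar i (f - g) = mulvar i f - mulvar i g"
  "mulvar i (- f) = - mulvar i f"
  "mulvar i 0 = 0"
  "mulvar i (smul c f) = smul c (mulvar i f)"
  by (auto simp: fun_eq_iff mulvar_def)

lemma dvar_simps [simp]:
  "dvar i (f + g) = dvar i f + dvar i g"
  "dvar i (f - g) = dvar i f - dvar i g"
  "dvar i (- f) = - dvar i f"
  "dvar i 0 = 0"
  "dvar i (smul c f) = smul c (dvar i f)"
  by (auto simp: fun_eq_iff dvar_def algebra_simps)

lemma mulvar_sum: "mulvar i (\<Sum>j\<in>A. F j) = (\<Sum>j\<in>A. mulvar i (F j))"
  by (simp add: fun_eq_iff mulvar_def sum_fun_apply)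

lemma dvar_sum: "dvar i (\<Sum>j\<in>A. F j) = (\<Sum>j\<in>A. dvar i (F j))"
  by (simp add: fun_eq_iff dvar_def sum_fun_apply sum_distrib_left)

lemma dvar_mulvar_same: "dvar i (mulvar i f) = mulvar i (dvar i f) + f"
proof (rule ext)
  fix \<alpha>
  show "dvar i (mulvar i f) \<alpha> = (mulvar i (dvar i f) + f) \<alpha>"
    by (cases "\<alpha> i") (auto simp: dvar_def mulvar_def fun_upd_idem algebra_simps)
qed

lemma dvar_mulvar_other: "i \<noteq> j \<Longrightarrow> dvar i (mulvar j f) = mulvar j (dvar i f)"
  by (auto simp: fun_eq_iff dvar_def mulvar_def fun_upd_twist)

lemma mulvar_commute: "mulvar i (mulvar j f) = mulvar j (mulvar i f)"
  by (cases "i = j") (auto simp: fun_eq_iff mulvar_def fun_upd_twist)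

lemma dvar_commute: "dvar i (dvar j f) = dvar j (dvar i f)"
  by (cases "i = j") (auto simp: fun_eq_iff dvar_def fun_upd_twist)

definition mon_divisors :: "mon \<Rightarrow> mon set" where
  "mon_divisors \<alpha> = {\<beta>. \<forall>i. \<beta> i \<le> \<alpha> i}"

definition finite_mon :: "mon \<Rightarrow> bool" where
  "finite_mon \<alpha> \<longleftrightarrow> finite {i. \<alpha> i \<noteq> 0}"

lemma ser_mult_divisors: "ser_mult f g \<alpha> = (\<Sum>\<beta>\<in>mon_divisors \<alpha>. f \<beta> * g (\<lambda>i. \<alpha> i - \<beta> i))"
  by (simp add: ser_mult_def mon_divisors_def)

lemma finite_mon_divisors_iff: "finite (mon_divisors \<alpha>) \<longleftrightarrow> finite_mon \<alpha>"
proof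
  assume fin: "finite (mon_divisors \<alpha>)"
  define single where "single i = (\<lambda>j. if j = i then \<alpha> i else 0)" for i
  have "inj_on single {i. \<alpha> i \<noteq> 0}"
  proof (rule inj_onI)
    fix x y assume "x \<in> {i. \<alpha> i \<noteq> 0}" and "single x = single y"
    then have "\<alpha> x \<noteq> 0" and "single x x = single y x" by simp_all
    then show "x = y" by (simp add: single_def split: if_splits)
  qed
  moreover have "single ` {i. \<alpha> i \<noteq> 0} \<subseteq> mon_divisors \<alpha>"
    by (auto simp: single_def mon_divisors_def)
  ultimately show "finite_mon \<alpha>"
    unfolding finite_mon_def using fin finite_imageD finite_subset by blast
next
  assume "finite_mon \<alpha>"
  then have fin: "finite {i. \<alpha> i \<noteq> 0}" by (simp add: finite_mon_def)
  let ?S = "{i. \<alpha> i \<noteq> 0}"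
  have "mon_divisors \<alpha> \<subseteq> (\<lambda>g i. if i \<in> ?S then g i else 0) ` (PiE ?S (\<lambda>i. {..\<alpha> i}))"
  proof
    fix \<beta> assume \<beta>: "\<beta> \<in> mon_divisors \<alpha>"
    have "\<beta> = (\<lambda>i. if i \<in> ?S then restrict \<beta> ?S i else 0)"
    proof
      fix i
      have "\<beta> i \<le> \<alpha> i" using \<beta> by (simp add: mon_divisors_def)
      then show "\<beta> i = (if i \<in> ?S then restrict \<beta> ?S i else 0)" by simp
    qed
    moreover have "restrict \<beta> ?S \<in> PiE ?S (\<lambda>i. {..\<alpha> i})"
      using \<beta> by (auto simp: mon_divisors_def)
    ultimately show "\<beta> \<in> (\<lambda>g i. if i \<in> ?S then g i else 0) ` (PiE ?S (\<lambda>i. {..\<alpha> i}))"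
      by blast
  qed
  moreover have "finite (PiE ?S (\<lambda>i. {..\<alpha> i}))"
    using fin by (simp add: finite_PiE)
  ultimately show "finite (mon_divisors \<alpha>)"
    using finite_subset by blast
qed

lemma finite_mon_upd [simp]: "finite_mon (\<alpha>(i := x)) \<longleftrightarrow> finite_mon \<alpha>"
proof -
  have "{j. (\<alpha>(i := x)) j \<noteq> 0} - {i} = {j. \<alpha> j \<noteq> 0} - {i}" by auto
  then show ?thesis
    unfolding finite_mon_def by (metis finite_Diff finite_Diff2 finite.emptyI finite_insert)
qed

lemma ser_mult_not_finite_mon: "\<not> finite_mon \<alpha> \<Longrightarrow> ser_mult f g \<alpha> = 0"
  by (simp add: ser_mult_divisors finite_mon_divisors_iff)

text \<open>Exponent functions of infinite support are elements of \<^typ>\<open>mon\<close> but not monomials.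
  The Cauchy product vanishes on them, its defining sum being infinite, so \<^const>\<open>ser_one\<close>
  is a unit only for series that vanish there as well.\<close>

definition proper_ser :: "ser \<Rightarrow> bool" where
  "proper_ser f \<longleftrightarrow> (\<forall>\<alpha>. \<not> finite_mon \<alpha> \<longrightarrow> f \<alpha> = 0)"

lemma proper_ser_mult: "proper_ser (ser_mult f g)"
  by (simp add: proper_ser_def ser_mult_not_finite_mon)

lemma proper_ser_sum: "(\<And>i. i \<in> A \<Longrightarrow> proper_ser (F i)) \<Longrightarrow> proper_ser (\<Sum>i\<in>A. F i)"
  by (simp add: proper_ser_def sum_fun_apply)

lemma ser_mult_linear_left [simp]:
  "ser_mult (f + g) h = ser_mult f h + ser_mult g h"
  "ser_mult (f - g) h = ser_mult f h - ser_mult g h"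
  "ser_mult 0 h = 0"
  "ser_mult (smul c f) h = smul c (ser_mult f h)"
  by (simp_all add: fun_eq_iff ser_mult_def algebra_simps sum.distrib sum_subtractf
      sum_distrib_left)

lemma ser_mult_sum_left: "ser_mult (\<Sum>i\<in>A. F i) h = (\<Sum>i\<in>A. ser_mult (F i) h)"
  by (simp add: fun_eq_iff ser_mult_def sum_fun_apply sum_distrib_right) (intro allI sum.swap)

lemma sum_mon_divisors_flip:
  "(\<Sum>\<beta>\<in>mon_divisors \<alpha>. F \<beta> (\<lambda>i. \<alpha> i - \<beta> i)) = (\<Sum>\<beta>\<in>mon_divisors \<alpha>. F (\<lambda>i. \<alpha> i - \<beta> i) \<beta>)"
  by (rule sum.reindex_bij_witness[where i="\<lambda>\<beta> i. \<alpha> i - \<beta> i" and j="\<lambda>\<beta> i. \<alpha> i - \<beta> i"])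
    (simp_all add: mon_divisors_def fun_eq_iff)

lemma ser_mult_commute: "ser_mult f g = ser_mult g f"
proof (rule ext)
  fix \<alpha>
  show "ser_mult f g \<alpha> = ser_mult g f \<alpha>"
    unfolding ser_mult_divisors
    using sum_mon_divisors_flip[where F="\<lambda>\<beta> \<gamma>. f \<beta> * g \<gamma>"] by (simp add: mult.commute)
qed

lemma ser_mult_linear_right [simp]:
  "ser_mult h (f + g) = ser_mult h f + ser_mult h g"
  "ser_mult h (f - g) = ser_mult h f - ser_mult h g"
  "ser_mult h 0 = 0"
  "ser_mult h (smul c f) = smul c (ser_mult h f)"
  by (simp_all add: ser_mult_commute[of h])

lemma ser_mult_sum_right: "ser_mult h (\<Sum>i\<in>A. F i) = (\<Sum>i\<in>A. ser_mult h (F i))"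
  by (simp add: ser_mult_commute[of h] ser_mult_sum_left)

lemma ser_mult_one_left: "proper_ser f \<Longrightarrow> ser_mult ser_one f = f"
proof (rule ext)
  fix \<alpha> assume f: "proper_ser f"
  show "ser_mult ser_one f \<alpha> = f \<alpha>"
  proof (cases "finite_mon \<alpha>")
    case True
    have "ser_mult ser_one f \<alpha> = (\<Sum>\<beta>\<in>mon_divisors \<alpha>. if \<beta> = (\<lambda>_. 0) then f \<alpha> else 0)"
      unfolding ser_mult_divisors by (rule sum.cong) (auto simp: ser_one_def)
    also have "\<dots> = f \<alpha>"
      using True by (simp add: finite_mon_divisors_iff) (simp add: mon_divisors_def)
    finally show ?thesis .
  next
    case False
    with f show ?thesis by (simp add: proper_ser_def ser_mult_not_finite_mon)
  qed
qed

lemma dvar_ser_one: "dvar i ser_one = 0"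
proof (rule ext)
  fix \<alpha>
  have "\<alpha>(i := Suc (\<alpha> i)) \<noteq> (\<lambda>_. 0)"
    by (metis fun_upd_same nat.distinct(1))
  then show "dvar i ser_one \<alpha> = 0 \<alpha>"
    by (simp add: dvar_def ser_one_def)
qed

lemma sum_mon_divisors_shift:
  assumes "0 < \<alpha> i"
  shows "(\<Sum>\<beta>\<in>{\<beta>\<in>mon_divisors \<alpha>. 0 < \<beta> i}. F \<beta>)
       = (\<Sum>\<beta>\<in>mon_divisors (\<alpha>(i := \<alpha> i - 1)). F (\<beta>(i := Suc (\<beta> i))))"
proof (rule sum.reindex_bij_witness[where j="\<lambda>\<beta>. \<beta>(i := \<beta> i - 1)" and i="\<lambda>\<beta>. \<beta>(i := Suc (\<beta> i))"])
  fix \<beta> assume "\<beta> \<in> {\<beta>\<in>mon_divisors \<alpha>. 0 < \<beta> i}"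
  then have le: "\<forall>j. \<beta> j \<le> \<alpha> j" and pos: "0 < \<beta> i" by (simp_all add: mon_divisors_def)
  show "\<beta>(i := \<beta> i - 1) \<in> mon_divisors (\<alpha>(i := \<alpha> i - 1))"
    unfolding mon_divisors_def using le diff_le_mono by simp
  show "(\<beta>(i := \<beta> i - 1))(i := Suc ((\<beta>(i := \<beta> i - 1)) i)) = \<beta>"
    using pos by simp
next
  fix \<beta> assume "\<beta> \<in> mon_divisors (\<alpha>(i := \<alpha> i - 1))"
  then have le: "\<forall>j. \<beta> j \<le> (\<alpha>(i := \<alpha> i - 1)) j" by (simp add: mon_divisors_def)
  have "Suc (\<beta> i) \<le> \<alpha> i"
    using le[rule_format, of i] assms by simp
  moreover have "\<beta> j \<le> \<alpha> j" if "j \<noteq> i" for j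
    using le[rule_format, of j] that by simp
  ultimately show "\<beta>(i := Suc (\<beta> i)) \<in> {\<beta>\<in>mon_divisors \<alpha>. 0 < \<beta> i}"
    by (simp add: mon_divisors_def)
  show "(\<beta>(i := Suc (\<beta> i)))(i := (\<beta>(i := Suc (\<beta> i))) i - 1) = \<beta>"
    by simp
qed simp

lemma mulvar_ser_mult: "mulvar i (ser_mult f g) = ser_mult (mulvar i f) g"
proof (rule ext)
  fix \<alpha>
  show "mulvar i (ser_mult f g) \<alpha> = ser_mult (mulvar i f) g \<alpha>"
  proof (cases "finite_mon \<alpha>")
    case fin: True
    let ?D = "{\<beta>\<in>mon_divisors \<alpha>. 0 < \<beta> i}"
    have "ser_mult (mulvar i f) g \<alpha>
        = (\<Sum>\<beta>\<in>mon_divisors \<alpha>. if 0 < \<beta> i then f (\<beta>(i := \<beta> i - 1)) * g (\<lambda>j. \<alpha> j - \<beta> j) else 0)"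
      unfolding ser_mult_divisors mulvar_def by (rule sum.cong) simp_all
    also have "\<dots> = (\<Sum>\<beta>\<in>?D. f (\<beta>(i := \<beta> i - 1)) * g (\<lambda>j. \<alpha> j - \<beta> j))"
      using fin by (intro sum.inter_filter[symmetric]) (simp add: finite_mon_divisors_iff)
    also have "\<dots> = mulvar i (ser_mult f g) \<alpha>"
    proof (cases "0 < \<alpha> i")
      case True
      have "(\<lambda>j. \<alpha> j - (\<beta>(i := Suc (\<beta> i))) j) = (\<lambda>j. (\<alpha>(i := \<alpha> i - 1)) j - \<beta> j)" for \<beta>
        by (simp add: fun_eq_iff)
      with True show ?thesis
        by (simp add: sum_mon_divisors_shift mulvar_def ser_mult_divisors)
    next
      case False
      have "?D = {}"
      proof (intro equals0I)
        fix \<beta> assume "\<beta> \<in> ?D"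
        then have "\<beta> i \<le> \<alpha> i" "0 < \<beta> i" by (simp_all add: mon_divisors_def)
        with False show False by simp
      qed
      then show ?thesis
        using False by (simp only: sum.empty) (simp add: mulvar_def)
    qed
    finally show ?thesis ..
  qed (simp add: mulvar_def ser_mult_not_finite_mon)
qed

lemma mulvar_ser_mult_right: "mulvar i (ser_mult f g) = ser_mult f (mulvar i g)"
  by (simp add: mulvar_ser_mult ser_mult_commute[of f])

lemma sum_mon_divisors_weighted:
  fixes \<alpha> :: mon and i :: nat
  assumes "finite_mon \<alpha>"
  defines "\<alpha>' \<equiv> \<alpha>(i := Suc (\<alpha> i))"
  shows "(\<Sum>\<beta>\<in>mon_divisors \<alpha>'. of_nat (\<beta> i) * (f \<beta> * g (\<lambda>j. \<alpha>' j - \<beta> j)))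
       = ser_mult (dvar i f) g \<alpha>"
proof -
  have "finite (mon_divisors \<alpha>')"
    using assms by (simp add: finite_mon_divisors_iff)
  then have "(\<Sum>\<beta>\<in>mon_divisors \<alpha>'. of_nat (\<beta> i) * (f \<beta> * g (\<lambda>j. \<alpha>' j - \<beta> j)))
      = (\<Sum>\<beta>\<in>{\<beta>\<in>mon_divisors \<alpha>'. 0 < \<beta> i}. of_nat (\<beta> i) * (f \<beta> * g (\<lambda>j. \<alpha>' j - \<beta> j)))"
    by (intro sum.mono_neutral_right) auto
  also have "\<dots> = ser_mult (dvar i f) g \<alpha>"
  proof -
    have "(\<lambda>j. \<alpha>' j - (\<beta>(i := Suc (\<beta> i))) j) = (\<lambda>j. \<alpha> j - \<beta> j)" for \<beta>
      by (simp add: \<alpha>'_def fun_eq_iff)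
    then show ?thesis
      by (simp add: sum_mon_divisors_shift \<alpha>'_def ser_mult_divisors dvar_def mult.assoc)
  qed
  finally show ?thesis .
qed

lemma dvar_ser_mult: "dvar i (ser_mult f g) = ser_mult (dvar i f) g + ser_mult f (dvar i g)"
proof (rule ext)
  fix \<alpha>
  let ?\<alpha>' = "\<alpha>(i := Suc (\<alpha> i))"
  let ?t = "\<lambda>\<beta>. f \<beta> * g (\<lambda>j. ?\<alpha>' j - \<beta> j)"
  show "dvar i (ser_mult f g) \<alpha> = (ser_mult (dvar i f) g + ser_mult f (dvar i g)) \<alpha>"
  proof (cases "finite_mon \<alpha>")
    case fin: True
    \<comment> \<open>Split the factor \<open>\<alpha> i + 1\<close> as \<open>\<beta> i + (\<alpha> i + 1 - \<beta> i)\<close>; the substitution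
      \<open>\<beta> \<mapsto> \<alpha>' - \<beta>\<close> turns the second sum into the first one with \<open>f\<close> and \<open>g\<close> exchanged.\<close>
    have "dvar i (ser_mult f g) \<alpha> = (\<Sum>\<beta>\<in>mon_divisors ?\<alpha>'. of_nat (Suc (\<alpha> i)) * ?t \<beta>)"
      unfolding dvar_def ser_mult_divisors by (rule sum_distrib_left)
    also have "\<dots> = (\<Sum>\<beta>\<in>mon_divisors ?\<alpha>'. of_nat (\<beta> i) * ?t \<beta> + of_nat (?\<alpha>' i - \<beta> i) * ?t \<beta>)"
    proof (rule sum.cong)
      fix \<beta> assume "\<beta> \<in> mon_divisors ?\<alpha>'"
      then have "\<forall>j. \<beta> j \<le> ?\<alpha>' j" by (simp add: mon_divisors_def)
      then have "\<beta> i \<le> ?\<alpha>' i" by (rule spec)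
      then have "\<beta> i \<le> Suc (\<alpha> i)" by simp
      then have "Suc (\<alpha> i) = \<beta> i + (?\<alpha>' i - \<beta> i)" by simp
      then show "of_nat (Suc (\<alpha> i)) * ?t \<beta> = of_nat (\<beta> i) * ?t \<beta> + of_nat (?\<alpha>' i - \<beta> i) * ?t \<beta>"
        by (simp only: of_nat_add[symmetric] distrib_right[symmetric])
    qed simp
    also have "\<dots> = (\<Sum>\<beta>\<in>mon_divisors ?\<alpha>'. of_nat (\<beta> i) * ?t \<beta>)
        + (\<Sum>\<beta>\<in>mon_divisors ?\<alpha>'. of_nat (?\<alpha>' i - \<beta> i) * ?t \<beta>)"
      by (rule sum.distrib)
    also have "(\<Sum>\<beta>\<in>mon_divisors ?\<alpha>'. of_nat (?\<alpha>' i - \<beta> i) * ?t \<beta>)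
        = (\<Sum>\<beta>\<in>mon_divisors ?\<alpha>'. of_nat (\<beta> i) * (f (\<lambda>j. ?\<alpha>' j - \<beta> j) * g \<beta>))"
      by (rule sum_mon_divisors_flip[where F="\<lambda>\<beta> \<gamma>. of_nat (\<gamma> i) * (f \<beta> * g \<gamma>)"])
    also have "\<dots> = (\<Sum>\<beta>\<in>mon_divisors ?\<alpha>'. of_nat (\<beta> i) * (g \<beta> * f (\<lambda>j. ?\<alpha>' j - \<beta> j)))"
      by (simp add: mult.commute)
    also have "\<dots> = ser_mult f (dvar i g) \<alpha>"
      unfolding sum_mon_divisors_weighted[OF fin] by (rule fun_cong[OF ser_mult_commute])
    finally show ?thesis
      by (simp only: sum_mon_divisors_weighted[OF fin] plus_fun_apply)
  qed (simp add: dvar_def ser_mult_not_finite_mon)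
qed

section \<open>Differential operators on a set of variables\<close>

text \<open>For \<open>i, j\<close> in the same block \<open>\<pi>(X\<^sub>i\<^sub>,\<^sub>j)\<close> is \<open>\<plusminus>ang i j\<close>, and for \<open>i < p \<le> j\<close> it is
  \<open>-\<i> boost i j\<close>. Thus \<open>casimir\<close> and \<open>mixed_casimir\<close> are, up to sign, the sums of
  the squares of \<open>\<pi>\<close> over the compact and over the noncompact basis vectors.\<close>

definition ang :: "nat \<Rightarrow> nat \<Rightarrow> ser \<Rightarrow> ser" where
  "ang a b g = mulvar a (dvar b g) - mulvar b (dvar a g)"

definition rsq :: "nat set \<Rightarrow> ser \<Rightarrow> ser" where
  "rsq I g = (\<Sum>i\<in>I. mulvar i (mulvar i g))"

definition lap :: "nat set \<Rightarrow> ser \<Rightarrow> ser" where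
  "lap I g = (\<Sum>i\<in>I. dvar i (dvar i g))"

definition euler :: "nat set \<Rightarrow> ser \<Rightarrow> ser" where
  "euler I g = (\<Sum>i\<in>I. mulvar i (dvar i g))"

definition casimir :: "nat set \<Rightarrow> ser \<Rightarrow> ser" where
  "casimir I g = (\<Sum>a\<in>I. \<Sum>b\<in>{b\<in>I. a < b}. ang a b (ang a b g))"

definition boost :: "nat \<Rightarrow> nat \<Rightarrow> ser \<Rightarrow> ser" where
  "boost i j g = mulvar i (mulvar j g) + dvar i (dvar j g)"

definition mixed_casimir :: "nat set \<Rightarrow> nat set \<Rightarrow> ser \<Rightarrow> ser" where
  "mixed_casimir I J g = (\<Sum>i\<in>I. \<Sum>j\<in>J. boost i j (boost i j g))"

lemma ang_simps [simp]:
  "ang a b (f + g) = ang a b f + ang a b g"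
  "ang a b (- f) = - ang a b f"
  "ang a b (smul c f) = smul c (ang a b f)"
  "ang a b 0 = 0"
  by (simp_all add: ang_def)

lemma ang_sum: "ang a b (\<Sum>j\<in>A. F j) = (\<Sum>j\<in>A. ang a b (F j))"
  by (simp add: ang_def mulvar_sum dvar_sum sum_subtractf)

lemma rsq_simps [simp]:
  "rsq I (f + g) = rsq I f + rsq I g"
  "rsq I (- f) = - rsq I f"
  "rsq I (smul c f) = smul c (rsq I f)"
  "rsq I 0 = 0"
  by (simp_all add: rsq_def sum.distrib sum_negf smul_sum)

lemma lap_simps [simp]:
  "lap I (f + g) = lap I f + lap I g"
  "lap I (- f) = - lap I f"
  "lap I (smul c f) = smul c (lap I f)"
  "lap I 0 = 0"
  by (simp_all add: lap_def sum.distrib sum_negf smul_sum)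

lemma euler_simps [simp]:
  "euler I (f + g) = euler I f + euler I g"
  "euler I (smul c f) = smul c (euler I f)"
  by (simp_all add: euler_def sum.distrib smul_sum)

lemma rsq_sum: "rsq I (\<Sum>j\<in>A. F j) = (\<Sum>j\<in>A. rsq I (F j))"
  unfolding rsq_def mulvar_sum by (rule sum.swap)

lemma casimir_sum: "casimir I (\<Sum>j\<in>A. F j) = (\<Sum>j\<in>A. casimir I (F j))"
proof -
  have "casimir I (\<Sum>j\<in>A. F j) = (\<Sum>a\<in>I. \<Sum>j\<in>A. \<Sum>b\<in>{b\<in>I. a < b}. ang a b (ang a b (F j)))"
    unfolding casimir_def ang_sum by (intro sum.cong refl sum.swap)
  also have "\<dots> = (\<Sum>j\<in>A. casimir I (F j))"
    unfolding casimir_def by (rule sum.swap)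
  finally show ?thesis .
qed

lemma euler_apply: "euler I h \<alpha> = of_nat (\<Sum>i\<in>I. \<alpha> i) * h \<alpha>"
proof -
  have "mulvar i (dvar i h) \<alpha> = of_nat (\<alpha> i) * h \<alpha>" for i
    by (cases "\<alpha> i") (simp_all add: mulvar_def dvar_def fun_upd_idem)
  then show ?thesis by (simp add: euler_def sum_fun_apply sum_distrib_right)
qed

lemma dvar_rsq:
  assumes "finite I"
  shows "dvar b (rsq I g) = rsq I (dvar b g) + (if b \<in> I then smul 2 (mulvar b g) else 0)"
proof -
  have "dvar b (mulvar i (mulvar i g))
      = mulvar i (mulvar i (dvar b g)) + (if b = i then smul 2 (mulvar b g) else 0)" for i
    by (cases "b = i") (simp_all add: dvar_mulvar_same dvar_mulvar_other smul_two)
  then show ?thesis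
    using assms by (simp add: rsq_def dvar_sum sum.distrib)
qed

lemma lap_rsq:
  assumes "finite I"
  shows "lap I (rsq I g) = rsq I (lap I g) + smul 4 (euler I g) + smul (2 * of_nat (card I)) g"
proof -
  have "lap I (rsq I g)
      = (\<Sum>b\<in>I. rsq I (dvar b (dvar b g)) + smul 4 (mulvar b (dvar b g)) + smul 2 g)"
    unfolding lap_def
  proof (rule sum.cong)
    fix b assume "b \<in> I"
    with assms show "dvar b (dvar b (rsq I g))
        = rsq I (dvar b (dvar b g)) + smul 4 (mulvar b (dvar b g)) + smul 2 g"
      by (simp add: dvar_rsq dvar_mulvar_same fun_eq_iff algebra_simps)
  qed simp
  also have "\<dots> = rsq I (lap I g) + smul 4 (euler I g) + smul (2 * of_nat (card I)) g"
    by (simp only: sum.distrib rsq_sum lap_def euler_def smul_sum sum_const_ser smul_simps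
        mult.commute)
  finally show ?thesis .
qed

lemma lap_commute: "lap I (lap J g) = lap J (lap I g)"
  unfolding lap_def dvar_sum by (subst sum.swap) (simp only: dvar_commute)

lemma rsq_commute: "rsq I (rsq J g) = rsq J (rsq I g)"
  unfolding rsq_def mulvar_sum by (subst sum.swap) (simp only: mulvar_commute)

lemma sum_ordered_pairs:
  fixes G :: "nat \<Rightarrow> nat \<Rightarrow> 'a::ab_group_add"
  assumes "finite I"
  shows "(\<Sum>a\<in>I. \<Sum>b\<in>{b\<in>I. a < b}. G a b + G b a) = (\<Sum>a\<in>I. \<Sum>b\<in>I. G a b) - (\<Sum>a\<in>I. G a a)"
proof -
  have "(\<Sum>a\<in>I. \<Sum>b\<in>I. G a b)
      = (\<Sum>a\<in>I. \<Sum>b\<in>I. (if a < b then G a b else 0) + (if b < a then G a b else 0)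
                          + (if a = b then G a b else 0))"
    by (intro sum.cong refl) auto
  also have "\<dots> = (\<Sum>a\<in>I. \<Sum>b\<in>I. if a < b then G a b else 0)
      + (\<Sum>a\<in>I. \<Sum>b\<in>I. if a < b then G b a else 0) + (\<Sum>a\<in>I. G a a)"
    using assms by (simp add: sum.distrib sum.swap[of "\<lambda>a b. if b < a then G a b else 0"])
  also have "\<dots> = (\<Sum>a\<in>I. \<Sum>b\<in>{b\<in>I. a < b}. G a b + G b a) + (\<Sum>a\<in>I. G a a)"
    using assms by (simp add: sum.inter_filter sum.distrib if_distrib)
  finally show ?thesis by simp
qed

lemma casimir_eq:
  assumes "finite I"
  shows "casimir I g = rsq I (lap I g) - euler I (euler I g) + smul (2 - of_nat (card I)) (euler I g)"
proof -
  define T1 where "T1 a b = mulvar a (dvar b (mulvar a (dvar b g)))" for a b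
  define T2 where "T2 a b = mulvar a (dvar b (mulvar b (dvar a g)))" for a b
  have "ang a b (ang a b g) = (T1 a b + T1 b a) - (T2 a b + T2 b a)" for a b
    by (simp add: ang_def T1_def T2_def algebra_simps)
  then have "casimir I g = ((\<Sum>a\<in>I. \<Sum>b\<in>I. T1 a b) - (\<Sum>a\<in>I. T1 a a))
      - ((\<Sum>a\<in>I. \<Sum>b\<in>I. T2 a b) - (\<Sum>a\<in>I. T2 a a))"
    by (simp add: casimir_def sum_subtractf sum_ordered_pairs[OF assms])
  moreover have "T1 a a = T2 a a" for a
    by (simp add: T1_def T2_def)
  moreover have "T1 a b = mulvar a (mulvar a (dvar b (dvar b g))) + (if a = b then mulvar a (dvar a g) else 0)"
    for a b
    by (cases "a = b") (simp_all add: T1_def dvar_mulvar_same dvar_mulvar_other)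
  then have "(\<Sum>a\<in>I. \<Sum>b\<in>I. T1 a b) = rsq I (lap I g) + euler I g"
    using assms by (simp add: sum.distrib rsq_def lap_def euler_def mulvar_sum)
  moreover have "T2 a b = mulvar a (mulvar b (dvar a (dvar b g))) + mulvar a (dvar a g)" for a b
    by (simp add: T2_def dvar_mulvar_same dvar_commute)
  then have "(\<Sum>a\<in>I. \<Sum>b\<in>I. T2 a b)
      = (\<Sum>a\<in>I. \<Sum>b\<in>I. mulvar a (mulvar b (dvar a (dvar b g)))) + smul (of_nat (card I)) (euler I g)"
    by (simp only: sum.distrib sum_const_ser euler_def smul_sum)
  moreover have "mulvar a (dvar a (mulvar b (dvar b g)))
      = mulvar a (mulvar b (dvar a (dvar b g))) + (if a = b then mulvar a (dvar a g) else 0)" for a b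
    by (cases "a = b") (simp_all add: dvar_mulvar_same dvar_mulvar_other dvar_commute)
  then have "euler I (euler I g)
      = (\<Sum>a\<in>I. \<Sum>b\<in>I. mulvar a (mulvar b (dvar a (dvar b g)))) + euler I g"
    using assms by (simp add: euler_def mulvar_sum dvar_sum sum.distrib)
  ultimately show ?thesis
    by (simp add: fun_eq_iff algebra_simps)
qed

lemma boost_square:
  assumes "i \<noteq> j"
  shows "boost i j (boost i j g) = mulvar i (mulvar i (mulvar j (mulvar j g)))
    + dvar i (dvar i (dvar j (dvar j g))) + smul 2 (mulvar i (dvar i (mulvar j (dvar j g))))
    + mulvar i (dvar i g) + mulvar j (dvar j g) + g"
  using assms
  by (simp add: boost_def dvar_mulvar_same dvar_mulvar_other mulvar_commute[of j i]
      dvar_commute[of j i] smul_two add_ac)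

lemma boost_commute: "boost i j = boost j i"
  by (simp add: fun_eq_iff boost_def mulvar_commute[of i] dvar_commute[of i])

lemma mixed_casimir_eq:
  assumes "finite I" and "finite J" and "I \<inter> J = {}"
  shows "mixed_casimir I J g = rsq I (rsq J g) + lap I (lap J g) + smul 2 (euler I (euler J g))
    + smul (of_nat (card J)) (euler I g) + smul (of_nat (card I)) (euler J g)
    + smul (of_nat (card I) * of_nat (card J)) g"
proof -
  have "mixed_casimir I J g = (\<Sum>i\<in>I. \<Sum>j\<in>J. mulvar i (mulvar i (mulvar j (mulvar j g)))
    + dvar i (dvar i (dvar j (dvar j g))) + smul 2 (mulvar i (dvar i (mulvar j (dvar j g))))
    + mulvar i (dvar i g) + mulvar j (dvar j g) + g)"
    unfolding mixed_casimir_def using assms(3) by (intro sum.cong refl boost_square) blast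
  also have "\<dots> = rsq I (rsq J g) + lap I (lap J g) + smul 2 (euler I (euler J g))
    + smul (of_nat (card J)) (euler I g) + smul (of_nat (card I)) (euler J g)
    + smul (of_nat (card I) * of_nat (card J)) g"
    by (simp only: sum.distrib rsq_def lap_def euler_def mulvar_sum dvar_sum smul_sum
        sum_const_ser smul_simps sum.swap[of "\<lambda>i j. mulvar i (dvar i g)"])
  finally show ?thesis .
qed

lemma mixed_casimir_commute: "mixed_casimir I J g = mixed_casimir J I g"
  unfolding mixed_casimir_def by (subst sum.swap) (simp only: boost_commute)

lemma ang_ser_mult: "ang a b (ser_mult f g) = ser_mult (ang a b f) g + ser_mult f (ang a b g)"
  unfolding ang_def dvar_ser_mult mulvar_simps
    mulvar_ser_mult[of a "dvar b f"] mulvar_ser_mult_right[of a f "dvar b g"]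
    mulvar_ser_mult[of b "dvar a f"] mulvar_ser_mult_right[of b f "dvar a g"]
  by simp

lemma ang_ser_pow: "ang a b u = 0 \<Longrightarrow> ang a b (ser_pow u k) = 0"
proof (induction k)
  case 0
  then show ?case by (simp add: ang_def dvar_ser_one)
qed (simp add: ang_ser_mult)

lemma ang_rsq_one:
  assumes "finite I" and "a \<in> I \<longleftrightarrow> b \<in> I"
  shows "ang a b (rsq I ser_one) = 0"
  using assms by (simp add: ang_def dvar_rsq dvar_ser_one mulvar_commute[of a b])

text \<open>With \<open>X\<^sup>+ = -(\<Delta>\<^sub>I + r\<^sub>J\<^sup>2)/2\<close>, \<open>X\<^sup>- = (r\<^sub>I\<^sup>2 + \<Delta>\<^sub>J)/2\<close> and
  \<open>H = E\<^sub>J - E\<^sub>I + (|J| - |I|)/2\<close>, the operator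
  \<open>mixed_casimir I J + casimir I + casimir J\<close> equals \<open>n/2 (n/2 - 2) - (H\<^sup>2 + 2H + 4 X\<^sup>- X\<^sup>+)\<close>
  for \<open>n = |I| + |J|\<close>: a constant minus the Casimir element of this \<open>sl\<^sub>2\<close>-triple.\<close>

lemma sl2_casimir_euler:
  assumes "finite I" and "finite J" and "I \<inter> J = {}"
    and "lap I f = - rsq J f"
  shows "mixed_casimir I J f + casimir I f + casimir J f
    = smul 2 (euler I (euler J f)) - euler I (euler I f) - euler J (euler J f)
      + smul (2 - of_nat (card I) + of_nat (card J)) (euler I f)
      + smul (of_nat (card I) - of_nat (card J) - 2) (euler J f)
      + smul (of_nat (card I) * of_nat (card J) - 2 * of_nat (card J)) f"
proof -
  have RL: "rsq I (lap I f) = - rsq I (rsq J f)"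
    using assms(4) by simp
  have LL: "lap I (lap J f) = - (rsq J (lap J f) + smul 4 (euler J f) + smul (2 * of_nat (card J)) f)"
    using assms(2,4) by (simp add: lap_commute[of I] lap_rsq)
  show ?thesis
    unfolding casimir_eq[OF assms(1)] casimir_eq[OF assms(2)] mixed_casimir_eq[OF assms(1-3)] RL LL
    by (simp add: fun_eq_iff algebra_simps)
qed

lemma sl2_casimir_lowest_weight:
  assumes "finite I" and "finite J" and "I \<inter> J = {}"
    and "lap I f = - rsq J f"
    and "euler J f = euler I f + smul (\<mu> + (of_nat (card I) - of_nat (card J)) / 2) f"
  shows "mixed_casimir I J f + casimir I f + casimir J f
    = smul (of_nat (card I + card J) / 2 * (of_nat (card I + card J) / 2 - 2) - \<mu> * (\<mu> + 2)) f"
proof (rule ext)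
  fix \<alpha>
  define c where "c = \<mu> + (of_nat (card I) - of_nat (card J)) / 2"
  define N M :: complex where "N = of_nat (card I)" and "M = of_nat (card J)"
  define eI eJ :: complex where "eI = of_nat (\<Sum>i\<in>I. \<alpha> i)" and "eJ = of_nat (\<Sum>i\<in>J. \<alpha> i)"
  have D: "eJ * f \<alpha> = eI * f \<alpha> + c * f \<alpha>"
    using fun_cong[OF assms(5), of \<alpha>] by (simp add: euler_apply eI_def eJ_def c_def)
  have "(mixed_casimir I J f + casimir I f + casimir J f) \<alpha>
      = 2 * eI * eJ * f \<alpha> - eI * eI * f \<alpha> - eJ * eJ * f \<alpha> + (2 - N + M) * eI * f \<alpha>
        + (N - M - 2) * eJ * f \<alpha> + (N * M - 2 * M) * f \<alpha>"
    unfolding sl2_casimir_euler[OF assms(1-4)]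
    by (simp add: euler_apply eI_def eJ_def N_def M_def mult_ac)
  also have "\<dots> = (- c * c + (N - M - 2) * c + N * M - 2 * M) * f \<alpha>"
    using D by algebra
  also have "\<dots> = ((N + M) / 2 * ((N + M) / 2 - 2) - \<mu> * (\<mu> + 2)) * f \<alpha>"
    by (simp add: c_def N_def M_def field_simps)
  finally show "(mixed_casimir I J f + casimir I f + casimir J f) \<alpha>
    = smul (of_nat (card I + card J) / 2 * (of_nat (card I + card J) / 2 - 2) - \<mu> * (\<mu> + 2)) f \<alpha>"
    by (simp add: N_def M_def)
qed

lemma sl2_casimir_weight_zero:
  assumes "finite I" and "finite J" and "I \<inter> J = {}"
    and "lap I f = - rsq J f" and "lap J f = - rsq I f"
    and "euler J f = euler I f + smul ((of_nat (card I) - of_nat (card J)) / 2) f"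
  shows "casimir J f - casimir I f
    = smul ((of_nat (card I) - of_nat (card J)) / 2 * (2 - of_nat (card I + card J) / 2)) f"
proof (rule ext)
  fix \<alpha>
  define c N M :: complex where "c = (of_nat (card I) - of_nat (card J)) / 2"
    and "N = of_nat (card I)" and "M = of_nat (card J)"
  define eI eJ :: complex where "eI = of_nat (\<Sum>i\<in>I. \<alpha> i)" and "eJ = of_nat (\<Sum>i\<in>J. \<alpha> i)"
  have D: "eJ * f \<alpha> = eI * f \<alpha> + c * f \<alpha>"
    using fun_cong[OF assms(6), of \<alpha>] by (simp add: euler_apply eI_def eJ_def c_def)
  have "rsq I (lap I f) = rsq J (lap J f)"
    using assms(4,5) by (simp add: rsq_commute[of I])
  then have "(casimir J f - casimir I f) \<alpha>
      = - eJ * eJ * f \<alpha> + eI * eI * f \<alpha> + (2 - M) * eJ * f \<alpha> - (2 - N) * eI * f \<alpha>"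
    using assms(1,2) by (simp add: casimir_eq euler_apply eI_def eJ_def N_def M_def algebra_simps)
  also have "\<dots> = ((N - M - 2 * c) * eI + (2 - M - c) * c) * f \<alpha>"
    using D by algebra
  also have "\<dots> = (c * (2 - (N + M) / 2)) * f \<alpha>"
    by (simp add: c_def N_def M_def field_simps)
  finally show "(casimir J f - casimir I f) \<alpha>
    = smul ((of_nat (card I) - of_nat (card J)) / 2 * (2 - of_nat (card I + card J) / 2)) f \<alpha>"
    by (simp add: c_def N_def M_def)
qed

section \<open>The space \<open>E\<close>\<close>

lemma ser_var_eq: "ser_var i = mulvar i ser_one"
proof (rule ext)
  fix \<alpha> :: mon
  have "\<alpha> = unitmon i \<longleftrightarrow> 0 < \<alpha> i \<and> \<alpha>(i := \<alpha> i - 1) = (\<lambda>_. 0)"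
  proof
    assume "0 < \<alpha> i \<and> \<alpha>(i := \<alpha> i - 1) = (\<lambda>_. 0)"
    then have "0 < \<alpha> i" and "\<And>j. (\<alpha>(i := \<alpha> i - 1)) j = 0" by simp_all
    then show "\<alpha> = unitmon i"
      unfolding unitmon_def fun_eq_iff by (metis One_nat_def Suc_pred fun_upd_other fun_upd_same)
  qed (simp add: unitmon_def fun_eq_iff)
  then show "ser_var i \<alpha> = mulvar i ser_one \<alpha>"
    by (simp add: ser_var_def mulvar_def ser_one_def)
qed

lemma rx2_eq: "rx2 p = rsq {..<p} ser_one"
  by (simp add: rx2_def rsq_def ser_var_eq)

lemma ry2_eq: "ry2 p q = rsq {p..<p+q} ser_one"
  by (simp add: ry2_def rsq_def ser_var_eq)

lemma ser_mult_rsq_one: "proper_ser f \<Longrightarrow> ser_mult (rsq I ser_one) f = rsq I f"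
  by (simp add: rsq_def ser_mult_sum_left ser_mult_one_left flip: mulvar_ser_mult)

lemma sum_fun_upd_nat:
  fixes \<beta> :: "'a \<Rightarrow> nat"
  assumes "finite A" and "a \<in> A"
  shows "sum (\<beta>(a := x)) A + \<beta> a = sum \<beta> A + x"
proof -
  have "sum (\<beta>(a := x)) A = x + sum \<beta> (A - {a})"
    using assms by (simp add: sum.remove[of A a] sum.cong[of "A - {a}" _ "\<beta>(a := x)" \<beta>])
  moreover have "sum \<beta> A = \<beta> a + sum \<beta> (A - {a})"
    using assms by (simp add: sum.remove)
  ultimately show ?thesis by simp
qed

text \<open>For \<open>a, b < n\<close> the operator \<open>x\<^sub>a \<partial>\<^sub>b\<close> preserves the total degree in the first
  \<open>n\<close> variables; this is what makes the degree-truncated sums in \<^const>\<open>subst2\<close> harmless.\<close>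

lemma mulvar_dvar_local:
  assumes "a < n" and "b < n"
    and eq: "\<And>\<beta>. (\<Sum>i<n. \<beta> i) = (\<Sum>i<n. \<alpha> i) \<Longrightarrow> F \<beta> = G \<beta>"
  shows "mulvar a (dvar b F) \<alpha> = mulvar a (dvar b G) \<alpha>"
proof (cases "0 < \<alpha> a")
  case True
  define \<gamma> where "\<gamma> = \<alpha>(a := \<alpha> a - 1)"
  have "(\<Sum>i<n. (\<gamma>(b := Suc (\<gamma> b))) i) + \<gamma> b = (\<Sum>i<n. \<gamma> i) + Suc (\<gamma> b)"
    using assms(2) by (intro sum_fun_upd_nat) simp_all
  moreover have "(\<Sum>i<n. \<gamma> i) + \<alpha> a = (\<Sum>i<n. \<alpha> i) + (\<alpha> a - 1)"
    unfolding \<gamma>_def using assms(1) by (intro sum_fun_upd_nat) simp_all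
  ultimately have "(\<Sum>i<n. (\<gamma>(b := Suc (\<gamma> b))) i) = (\<Sum>i<n. \<alpha> i)"
    using True by simp
  with True show ?thesis
    by (simp add: mulvar_def dvar_def eq \<gamma>_def)
qed (simp add: mulvar_def)

lemma ang_subst2:
  assumes "a < n" and "b < n" and "ang a b u = 0" and "ang a b v = 0"
  shows "ang a b (subst2 n c u v) = 0"
proof (rule ext)
  fix \<alpha> :: mon
  define N where "N = (\<Sum>i<n. \<alpha> i)"
  define F where "F = (\<Sum>k\<le>N. \<Sum>l\<le>N. smul (c (k, l)) (ser_mult (ser_pow u k) (ser_pow v l)))"
  have local: "subst2 n c u v \<beta> = F \<beta>" if "(\<Sum>i<n. \<beta> i) = (\<Sum>i<n. \<alpha> i)" for \<beta>
    unfolding subst2_def F_def sum_fun_apply smul_apply that N_def ..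
  have "ang a b (subst2 n c u v) \<alpha> = ang a b F \<alpha>"
    unfolding ang_def minus_apply
    using mulvar_dvar_local[OF assms(1,2) local] mulvar_dvar_local[OF assms(2,1) local] by simp
  also have "ang a b F = 0"
    using assms(3,4) by (simp add: F_def ang_sum ang_ser_mult ang_ser_pow)
  finally show "ang a b (subst2 n c u v) \<alpha> = 0 \<alpha>" by simp
qed

lemma ang_subst2_rx2_ry2:
  assumes "a < p + q" and "b < p + q" and "a < p \<longleftrightarrow> b < p"
  shows "ang a b (subst2 (p + q) c (rx2 p) (ry2 p q)) = 0"
  unfolding rx2_eq ry2_eq using assms by (intro ang_subst2 ang_rsq_one) auto

lemma dvar_harm_x: "harm_x p k h \<Longrightarrow> p \<le> b \<Longrightarrow> dvar b h = 0"
  unfolding harm_x_def by (rule ext) (force simp: dvar_def)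

lemma dvar_harm_y: "harm_y p q l h \<Longrightarrow> b < p \<Longrightarrow> dvar b h = 0"
  unfolding harm_y_def by (rule ext) (force simp: dvar_def)

lemma ang_elem_x:
  assumes "a < p" and "b < p" and "harm_y p q l h2"
  shows "ang a b (elem p q h1 h2 c) = elem p q (ang a b h1) h2 c"
proof -
  have "ang a b h2 = 0"
    using assms by (simp add: ang_def dvar_harm_y)
  with assms show ?thesis
    by (simp add: elem_def ang_ser_mult ang_subst2_rx2_ry2)
qed

lemma ang_elem_y:
  assumes "p \<le> a" and "a < p + q" and "p \<le> b" and "b < p + q" and "harm_x p k h1"
  shows "ang a b (elem p q h1 h2 c) = elem p q h1 (ang a b h2) c"
proof -
  have "ang a b h1 = 0"
    using assms by (simp add: ang_def dvar_harm_x)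
  with assms show ?thesis
    by (simp add: elem_def ang_ser_mult ang_subst2_rx2_ry2)
qed

lemma elem_sum_left: "elem p q (\<Sum>j\<in>A. F j) h2 c = (\<Sum>j\<in>A. elem p q (F j) h2 c)"
  by (simp add: elem_def ser_mult_sum_left)

lemma elem_sum_right: "elem p q h1 (\<Sum>j\<in>A. F j) c = (\<Sum>j\<in>A. elem p q h1 (F j) c)"
  by (simp add: elem_def ser_mult_sum_left ser_mult_sum_right)

lemma elem_smul_left: "elem p q (smul d h1) h2 c = smul d (elem p q h1 h2 c)"
  by (simp add: elem_def)

lemma elem_smul_right: "elem p q h1 (smul d h2) c = smul d (elem p q h1 h2 c)"
  by (simp add: elem_def)

lemma casimir_elem_x:
  assumes "harm_y p q l h2"
  shows "casimir {..<p} (elem p q h1 h2 c) = elem p q (casimir {..<p} h1) h2 c"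
  unfolding casimir_def elem_sum_left using assms by (intro sum.cong refl) (simp add: ang_elem_x)

lemma casimir_elem_y:
  assumes "harm_x p k h1"
  shows "casimir {p..<p+q} (elem p q h1 h2 c) = elem p q h1 (casimir {p..<p+q} h2) c"
  unfolding casimir_def elem_sum_right using assms by (intro sum.cong refl) (simp add: ang_elem_y)

lemma casimir_harmonic:
  assumes "finite I" and "lap I h = 0" and "euler I h = smul (of_nat k) h"
  shows "casimir I h = smul (- (of_nat k * (of_nat k + of_nat (card I) - 2))) h"
proof -
  have "casimir I h = smul (2 - of_nat (card I)) (smul (of_nat k) h) - smul (of_nat k) (smul (of_nat k) h)"
    by (simp add: casimir_eq[OF assms(1)] assms(2,3))
  then show ?thesis
    by (simp add: fun_eq_iff algebra_simps)
qed

lemma euler_harm_x: "harm_x p k h \<Longrightarrow> euler {..<p} h = smul (of_nat k) h"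
  unfolding harm_x_def by (rule ext) (force simp: euler_apply)

lemma euler_harm_y: "harm_y p q l h \<Longrightarrow> euler {p..<p+q} h = smul (of_nat l) h"
  unfolding harm_y_def by (rule ext) (force simp: euler_apply)

lemma Lap_x_eq: "Lap_x p f = lap {..<p} f"
  by (simp add: Lap_x_def lap_def)

lemma Lap_y_eq: "Lap_y p q f = lap {p..<p+q} f"
  by (simp add: Lap_y_def lap_def)

lemma casimir_harm_x:
  "harm_x p k h \<Longrightarrow> casimir {..<p} h = smul (- (of_nat k * (of_nat k + of_nat p - 2))) h"
  using casimir_harmonic[of "{..<p}" h k] by (simp add: harm_x_def Lap_x_eq euler_harm_x)

lemma casimir_harm_y:
  "harm_y p q l h \<Longrightarrow> casimir {p..<p+q} h = smul (- (of_nat l * (of_nat l + of_nat q - 2))) h"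
  using casimir_harmonic[of "{p..<p+q}" h l] by (simp add: harm_y_def Lap_y_eq euler_harm_y)

lemma K_homog_casimir:
  assumes "K_homog p q kp km f"
  obtains k l where "kp = real k + real p / 2" and "km = real l + real q / 2" and "proper_ser f"
    and "casimir {..<p} f = smul (- (of_nat k * (of_nat k + of_nat p - 2))) f"
    and "casimir {p..<p+q} f = smul (- (of_nat l * (of_nat l + of_nat q - 2))) f"
proof -
  obtain k l N h1 h2 c where kl: "real k + real p / 2 = kp" "real l + real q / 2 = km"
    and f: "f = (\<Sum>i<(N::nat). elem p q (h1 i) (h2 i) (c i))"
    and harm: "\<And>i. i < N \<Longrightarrow> harm_x p k (h1 i) \<and> harm_y p q l (h2 i)"
    using assms unfolding K_homog_def by blast
  have proper: "proper_ser f"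
    unfolding f elem_def by (intro proper_ser_sum proper_ser_mult)
  have cas_x: "casimir {..<p} f = smul (- (of_nat k * (of_nat k + of_nat p - 2))) f"
    unfolding f casimir_sum smul_sum
    by (intro sum.cong refl)
      (simp add: harm casimir_elem_x[where l = l] casimir_harm_x[where k = k] elem_smul_left)
  have cas_y: "casimir {p..<p+q} f = smul (- (of_nat l * (of_nat l + of_nat q - 2))) f"
    unfolding f casimir_sum smul_sum
    by (intro sum.cong refl)
      (simp add: harm casimir_elem_y[where k = k] casimir_harm_y[where l = l] elem_smul_right)
  show ?thesis
    by (rule that[of k l]) (use kl proper cas_x cas_y in auto)
qed

lemma Xplus_zero_lap_eq:
  assumes "proper_ser f" and "Xplus p q f = 0"
  shows "lap {..<p} f = - rsq {p..<p+q} f"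
proof -
  have "smul (- 1 / 2) (lap {..<p} f + rsq {p..<p+q} f) = 0"
    using assms(2) unfolding Xplus_def Lap_x_eq ry2_eq ser_mult_rsq_one[OF assms(1)] .
  then show ?thesis
    by (simp add: smul_eq_0_iff eq_neg_iff_add_eq_0 del: smul_simps)
qed

lemma Xminus_zero_lap_eq:
  assumes "proper_ser f" and "Xminus p q f = 0"
  shows "lap {p..<p+q} f = - rsq {..<p} f"
proof -
  have "smul (1 / 2) (rsq {..<p} f + lap {p..<p+q} f) = 0"
    using assms(2) unfolding Xminus_def Lap_y_eq rx2_eq ser_mult_rsq_one[OF assms(1)] .
  then show ?thesis
    by (simp add: smul_eq_0_iff eq_neg_iff_add_eq_0 add.commute del: smul_simps)
qed

lemma Hop_eigen_euler:
  assumes "Hop p q f = smul \<mu> f"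
  shows "euler {p..<p+q} f = euler {..<p} f + smul (\<mu> + (of_nat p - of_nat q) / 2) f"
proof (rule ext)
  fix \<alpha>
  have "- euler {..<p} f \<alpha> + euler {p..<p+q} f \<alpha> + (of_nat q - of_nat p) / 2 * f \<alpha> = \<mu> * f \<alpha>"
    using fun_cong[OF assms, of \<alpha>] by (simp add: Hop_def Eul_x_def Eul_y_def euler_def)
  then show "euler {p..<p+q} f \<alpha> = (euler {..<p} f + smul (\<mu> + (of_nat p - of_nat q) / 2) f) \<alpha>"
    by (simp add: field_simps)
qed

section \<open>The element \<open>\<Xi>\<close>\<close>

definition sig_ratio :: "nat \<Rightarrow> nat \<Rightarrow> complex" where
  "sig_ratio p q = (of_nat p - of_nat q) / of_nat (p + q)"

lemma sig_ratio_mult: "p + q \<noteq> 0 \<Longrightarrow> sig_ratio p q * of_nat (p + q) = of_nat p - of_nat q"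
  by (simp add: sig_ratio_def del: of_nat_add)

definition xi_coeff :: "nat \<Rightarrow> nat \<Rightarrow> nat \<Rightarrow> nat \<Rightarrow> complex" where
  "xi_coeff p q a b =
     (if b < p then sig_ratio p q - 1 else if p \<le> a then sig_ratio p q + 1 else - sig_ratio p q)"

lemma sum_of_bool_eq_in: "finite A \<Longrightarrow> (\<Sum>i\<in>A. of_bool (i = a)) = (of_bool (a \<in> A) :: 'b::semiring_1)"
  by (simp add: of_bool_def)

lemma sum_Mmat_prod:
  assumes "a < b" and "b < n" and "c < d"
  shows "(\<Sum>k<n. tp (Mmat t k) (Mmat k t) a b c d)
      = (if (c, d) = (a, b) then - (of_bool (t = a) + of_bool (t = b)) else 0)"
    and "(\<Sum>k<n. tp (Mmat k t) (Mmat t k) a b c d)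
      = (if (c, d) = (a, b) then - (of_bool (t = a) + of_bool (t = b)) else 0)"
proof -
  have "Mmat t k a b * Mmat k t c d
      = (if (c, d) = (a, b) \<and> (k = b \<and> t = a \<or> k = a \<and> t = b) then -1 else 0)"
    and "Mmat k t a b * Mmat t k c d
      = (if (c, d) = (a, b) \<and> (k = b \<and> t = a \<or> k = a \<and> t = b) then -1 else 0)" for k
    using assms(1,3) by (auto simp: Mmat_def)
  moreover have "(\<Sum>k<n. if (c, d) = (a, b) \<and> (k = b \<and> t = a \<or> k = a \<and> t = b) then -1 else 0)
      = (if (c, d) = (a, b) then - (of_bool (t = a) + of_bool (t = b)) else (0::complex))"
    using assms by (cases "t = a"; cases "t = b") (auto simp: sum.delta)
  ultimately show "(\<Sum>k<n. tp (Mmat t k) (Mmat k t) a b c d)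
      = (if (c, d) = (a, b) then - (of_bool (t = a) + of_bool (t = b)) else 0)"
    and "(\<Sum>k<n. tp (Mmat k t) (Mmat t k) a b c d)
      = (if (c, d) = (a, b) then - (of_bool (t = a) + of_bool (t = b)) else 0)"
    by (simp_all add: tp_def)
qed

lemma Snat_diag:
  assumes "a < b" and "b < n" and "c < d"
  shows "Snat n t t a b c d
    = (if (c, d) = (a, b) then 2 / of_nat n - (of_bool (t = a) + of_bool (t = b)) else 0)"
proof (cases "(c, d) = (a, b)")
  case True
  have "Qnat n a b c d = - 2"
    using assms True
    by (simp add: Qnat_def sum_fun_apply sum_Mmat_prod sum_subtractf sum_negf sum_of_bool_eq_in)
  with assms True show ?thesis
    by (simp add: Snat_def sum.distrib sum_Mmat_prod)
next
  case False
  then have "Qnat n a b c d = 0"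
    using assms by (auto simp: Qnat_def sum_fun_apply sum_Mmat_prod)
  with assms False show ?thesis
    by (auto simp: Snat_def sum.distrib sum_Mmat_prod)
qed

lemma Xi_eq:
  assumes "a < b" and "b < p + q" and "c < d"
  shows "Xi p q a b c d = (if (c, d) = (a, b) then xi_coeff p q a b else 0)"
proof (cases "(c, d) = (a, b)")
  case True
  have sum_x: "(\<Sum>t<p. Snat (p + q) t t a b a b)
      = of_nat p * (2 / of_nat (p + q)) - (of_bool (a < p) + of_bool (b < p))"
    using assms by (simp add: Snat_diag sum_subtractf sum.distrib sum_of_bool_eq_in)
  have sum_y: "(\<Sum>t\<in>{p..<p+q}. Snat (p + q) t t a b a b)
      = of_nat q * (2 / of_nat (p + q)) - (of_bool (p \<le> a) + of_bool (p \<le> b))"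
    using assms by (simp add: Snat_diag sum_subtractf sum.distrib sum_of_bool_eq_in)
  have phase: "sq p b / sq p a * (sq p b / sq p a) = (if a < p \<and> p \<le> b then -1 else 1)"
    using assms by (auto simp: sq_def)
  have "Xi p q a b a b = (if a < p \<and> p \<le> b then -1 else 1) * (1 / 2 *
      ((of_nat p * (2 / of_nat (p + q)) - (of_bool (a < p) + of_bool (b < p)))
       - (of_nat q * (2 / of_nat (p + q)) - (of_bool (p \<le> a) + of_bool (p \<le> b)))))"
    unfolding Xi_def Phi_inv_tens_def sum_x sum_y phase ..
  also have "\<dots> = (if a < p \<and> p \<le> b then -1 else 1) * (sig_ratio p q
      + (of_bool (p \<le> a) + of_bool (p \<le> b) - of_bool (a < p) - of_bool (b < p)) / 2)"
    by (simp add: sig_ratio_def diff_divide_distrib algebra_simps)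
  also have "\<dots> = xi_coeff p q a b"
    using assms by (auto simp: xi_coeff_def)
  finally show ?thesis
    using True by simp
next
  case False
  have "Snat (p + q) t t a b c d = 0" for t
    using assms False by (simp only: Snat_diag if_False)
  then show ?thesis
    unfolding if_not_P[OF False] by (simp add: Xi_def Phi_inv_tens_def)
qed

lemma sum_Xi_row:
  assumes "i < j" and "j < p + q"
  shows "(\<Sum>k<p+q. \<Sum>l\<in>{k<..<p+q}. smul (eps p j * eps p l * Xi p q i j k l) (T k l))
    = smul (xi_coeff p q i j) (T i j)"
proof -
  have "(\<Sum>k<p+q. \<Sum>l\<in>{k<..<p+q}. smul (eps p j * eps p l * Xi p q i j k l) (T k l))
      = (\<Sum>k<p+q. \<Sum>l\<in>{k<..<p+q}. if k = i \<and> l = j then smul (xi_coeff p q i j) (T i j) else 0)"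
    using assms by (intro sum.cong refl) (auto simp: Xi_eq eps_def)
  also have "\<dots> = (\<Sum>k<p+q. if k = i then smul (xi_coeff p q i j) (T i j) else 0)"
    using assms by (intro sum.cong refl) auto
  also have "\<dots> = smul (xi_coeff p q i j) (T i j)"
    using assms by simp
  finally show ?thesis .
qed

lemma Xihat_diagonal:
  "Xihat p q f = (\<Sum>i<p+q. \<Sum>j\<in>{i<..<p+q}. smul (xi_coeff p q i j) (pi_X p i j (pi_X p i j f)))"
  unfolding Xihat_def pi_gamma2_def by (intro sum.cong refl) (simp add: sum_Xi_row)

lemma sum_pairs_blocks:
  fixes G :: "nat \<Rightarrow> nat \<Rightarrow> 'a::comm_monoid_add"
  shows "(\<Sum>i<p+q. \<Sum>j\<in>{i<..<p+q}. G i j)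
    = (\<Sum>i<p. \<Sum>j\<in>{j\<in>{..<p}. i < j}. G i j) + (\<Sum>i\<in>{p..<p+q}. \<Sum>j\<in>{j\<in>{p..<p+q}. i < j}. G i j)
      + (\<Sum>i<p. \<Sum>j\<in>{p..<p+q}. G i j)"
proof -
  have "(\<Sum>i<p+q. \<Sum>j\<in>{i<..<p+q}. G i j)
      = (\<Sum>i<p. \<Sum>j\<in>{i<..<p+q}. G i j) + (\<Sum>i\<in>{p..<p+q}. \<Sum>j\<in>{i<..<p+q}. G i j)"
    by (subst sum.union_disjoint[symmetric]) (auto intro: sum.cong)
  moreover have "(\<Sum>j\<in>{i<..<p+q}. G i j) = (\<Sum>j\<in>{j\<in>{..<p}. i < j}. G i j) + (\<Sum>j\<in>{p..<p+q}. G i j)"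
    if "i < p" for i
    using that by (subst sum.union_disjoint[symmetric]) (auto intro: sum.cong)
  moreover have "{i<..<p+q} = {j\<in>{p..<p+q}. i < j}" if "p \<le> i" for i
    using that by auto
  ultimately show ?thesis
    by (simp add: sum.distrib add_ac)
qed

lemma Xihat_eq:
  "Xihat p q f = smul (sig_ratio p q - 1) (casimir {..<p} f)
    + smul (sig_ratio p q + 1) (casimir {p..<p+q} f)
    + smul (sig_ratio p q) (mixed_casimir {..<p} {p..<p+q} f)"
proof -
  have "pi_X p i j g = ang i j g" if "i < j" "j < p" for i j g
    using that by (simp add: pi_X_def ang_def)
  moreover have "pi_X p i j g = - ang i j g" if "p \<le> i" "p \<le> j" for i j g
    using that by (simp add: pi_X_def ang_def)
  moreover have "pi_X p i j g = smul (- \<i>) (boost i j g)" if "i < p" "p \<le> j" for i j g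
    using that by (simp add: pi_X_def boost_def)
  ultimately show ?thesis
    unfolding Xihat_diagonal sum_pairs_blocks casimir_def mixed_casimir_def smul_sum
    by (intro arg_cong2[where f = "(+)"] sum.cong refl) (auto simp: xi_coeff_def boost_def)
qed

lemma Xihat_eigen:
  assumes "casimir {..<p} f = smul (- a) f" and "casimir {p..<p+q} f = smul (- b) f"
    and "mixed_casimir {..<p} {p..<p+q} f + casimir {..<p} f + casimir {p..<p+q} f = smul s f"
  shows "Xihat p q f = smul (a - b + sig_ratio p q * s) f"
proof -
  have "Xihat p q f = casimir {p..<p+q} f - casimir {..<p} f
      + smul (sig_ratio p q) (mixed_casimir {..<p} {p..<p+q} f + casimir {..<p} f + casimir {p..<p+q} f)"
    by (simp add: Xihat_eq fun_eq_iff algebra_simps)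
  then show ?thesis
    unfolding assms(3) unfolding assms(1,2) by (simp add: fun_eq_iff algebra_simps)
qed

section \<open>Eigenvalues on \<open>M\<^sup>\<plusminus>(m)\<close>\<close>

lemma sl2_casimir_on_M:
  assumes "f \<in> Mplus p q m \<or> f \<in> Mminus p q m" and "proper_ser f"
  shows "mixed_casimir {..<p} {p..<p+q} f + casimir {..<p} f + casimir {p..<p+q} f
    = smul (of_nat (p + q) / 2 * (of_nat (p + q) / 2 - 2) - of_nat m * (of_nat m + 2)) f"
proof -
  let ?X = "{..<p}" and ?Y = "{p..<p+q}"
  have disj: "?X \<inter> ?Y = {}" "?Y \<inter> ?X = {}"
    by auto
  from assms(1) show ?thesis
  proof
    assume "f \<in> Mplus p q m"
    then have H: "Hop p q f = smul (of_nat m) f" and "Xplus p q f = 0"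
      by (simp_all add: Mplus_def)
    then have "lap ?X f = - rsq ?Y f"
      using Xplus_zero_lap_eq[OF assms(2)] by simp
    moreover have "euler ?Y f = euler ?X f + smul (of_nat m + (of_nat (card ?X) - of_nat (card ?Y)) / 2) f"
      using Hop_eigen_euler[OF H] by simp
    ultimately show ?thesis
      using sl2_casimir_lowest_weight[OF finite_lessThan finite_atLeastLessThan disj(1)] by simp
  next
    assume "f \<in> Mminus p q m"
    then have H: "Hop p q f = smul (- of_nat m) f" and "Xminus p q f = 0"
      by (simp_all add: Mminus_def)
    then have "lap ?Y f = - rsq ?X f"
      using Xminus_zero_lap_eq[OF assms(2)] by simp
    moreover have "euler ?X f = euler ?Y f + smul (of_nat m + (of_nat (card ?Y) - of_nat (card ?X)) / 2) f"
      unfolding Hop_eigen_euler[OF H] by (simp add: fun_eq_iff field_simps)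
    ultimately show ?thesis
      using sl2_casimir_lowest_weight[OF finite_atLeastLessThan finite_lessThan disj(2)]
      by (simp add: mixed_casimir_commute[of ?Y] add_ac)
  qed
qed

lemma casimir_diff_on_M_zero:
  assumes "f \<in> Mplus p q 0 \<or> f \<in> Mminus p q 0" and "proper_ser f"
  shows "casimir {p..<p+q} f - casimir {..<p} f
    = smul ((of_nat p - of_nat q) / 2 * (2 - of_nat (p + q) / 2)) f"
proof -
  let ?X = "{..<p}" and ?Y = "{p..<p+q}"
  have H: "Hop p q f = smul 0 f" and "Xplus p q f = 0" and "Xminus p q f = 0"
    using assms(1) by (auto simp: Mplus_def Mminus_def)
  then have "lap ?X f = - rsq ?Y f" and "lap ?Y f = - rsq ?X f"
    and "euler ?Y f = euler ?X f + smul ((of_nat (card ?X) - of_nat (card ?Y)) / 2) f"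
    using Xplus_zero_lap_eq[OF assms(2)] Xminus_zero_lap_eq[OF assms(2)] Hop_eigen_euler[OF H]
    by simp_all
  moreover have "?X \<inter> ?Y = {}" by auto
  ultimately show ?thesis
    using sl2_casimir_weight_zero[of ?X ?Y f] by simp
qed

lemma K_type_product_eq:
  "(real k + real p / 2 - (real l + real q / 2)) * (real k + real p / 2 + (real l + real q / 2) - 2)
    = real k * (real k + real p - 2) - real l * (real l + real q - 2)
      + (real p - real q) * (real (p + q) / 4 - 1)"
  by (simp add: field_simps)

lemma lambda_eq:
  assumes "p + q \<noteq> 0"
  shows "complex_of_real ((real k + real p / 2 - (real l + real q / 2))
        * (real k + real p / 2 + (real l + real q / 2) - 2)
      - (real p - real q) / real (p + q) * real m * real (m + 2))
    = of_nat k * (of_nat k + of_nat p - 2) - of_nat l * (of_nat l + of_nat q - 2)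
      + sig_ratio p q * (of_nat (p + q) / 2 * (of_nat (p + q) / 2 - 2) - of_nat m * (of_nat m + 2))"
proof -
  have "complex_of_real ((real k + real p / 2 - (real l + real q / 2))
        * (real k + real p / 2 + (real l + real q / 2) - 2)
      - (real p - real q) / real (p + q) * real m * real (m + 2))
    = of_nat k * (of_nat k + of_nat p - 2) - of_nat l * (of_nat l + of_nat q - 2)
      + (of_nat p - of_nat q) * (of_nat (p + q) / 4 - 1) - sig_ratio p q * (of_nat m * (of_nat m + 2))"
    unfolding K_type_product_eq by (simp add: sig_ratio_def)
  also have "\<dots> = of_nat k * (of_nat k + of_nat p - 2) - of_nat l * (of_nat l + of_nat q - 2)
      + sig_ratio p q * of_nat (p + q) * (of_nat (p + q) / 4 - 1)
      - sig_ratio p q * (of_nat m * (of_nat m + 2))"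
    unfolding sig_ratio_mult[OF assms] ..
  also have "\<dots> = of_nat k * (of_nat k + of_nat p - 2) - of_nat l * (of_nat l + of_nat q - 2)
      + sig_ratio p q * (of_nat (p + q) / 2 * (of_nat (p + q) / 2 - 2) - of_nat m * (of_nat m + 2))"
    by (simp only: of_nat_add[symmetric]) (simp add: field_simps)
  finally show ?thesis .
qed

lemma Xihat_eigen_on_M:
  assumes "f \<in> Mplus p q m \<or> f \<in> Mminus p q m" and "K_homog p q kp km f" and "p + q \<noteq> 0"
  shows "Xihat p q f = smul (complex_of_real
    ((kp - km) * (kp + km - 2) - (real p - real q) / real (p + q) * real m * real (m + 2))) f"
proof -
  obtain k l where kp: "kp = real k + real p / 2" and km: "km = real l + real q / 2"
    and proper: "proper_ser f"
    and cas_x: "casimir {..<p} f = smul (- (of_nat k * (of_nat k + of_nat p - 2))) f"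
    and cas_y: "casimir {p..<p+q} f = smul (- (of_nat l * (of_nat l + of_nat q - 2))) f"
    using K_homog_casimir[OF assms(2)] by blast
  have "Xihat p q f = smul (of_nat k * (of_nat k + of_nat p - 2) - of_nat l * (of_nat l + of_nat q - 2)
      + sig_ratio p q * (of_nat (p + q) / 2 * (of_nat (p + q) / 2 - 2) - of_nat m * (of_nat m + 2))) f"
    by (rule Xihat_eigen[OF cas_x cas_y sl2_casimir_on_M[OF assms(1) proper]])
  then show ?thesis
    unfolding kp km lambda_eq[OF assms(3)] .
qed

lemma K_type_weight_zero:
  assumes "f \<in> Mplus p q 0 \<or> f \<in> Mminus p q 0" and "K_homog p q kp km f" and "f \<noteq> 0"
  shows "(kp - km) * (kp + km - 2) = 0"
proof -
  obtain k l where kp: "kp = real k + real p / 2" and km: "km = real l + real q / 2"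
    and proper: "proper_ser f"
    and cas_x: "casimir {..<p} f = smul (- (of_nat k * (of_nat k + of_nat p - 2))) f"
    and cas_y: "casimir {p..<p+q} f = smul (- (of_nat l * (of_nat l + of_nat q - 2))) f"
    using K_homog_casimir[OF assms(2)] by blast
  have "smul (of_nat k * (of_nat k + of_nat p - 2) - of_nat l * (of_nat l + of_nat q - 2)) f
      = casimir {p..<p+q} f - casimir {..<p} f"
    unfolding cas_x cas_y by (simp add: fun_eq_iff algebra_simps)
  also have "\<dots> = smul ((of_nat p - of_nat q) / 2 * (2 - of_nat (p + q) / 2)) f"
    by (rule casimir_diff_on_M_zero[OF assms(1) proper])
  finally have "complex_of_real (real k * (real k + real p - 2) - real l * (real l + real q - 2))
      = complex_of_real ((real p - real q) / 2 * (2 - real (p + q) / 2))"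
    using assms(3) by (auto dest: smul_right_cancel)
  then show ?thesis
    unfolding kp km K_type_product_eq of_real_eq_iff by (simp add: field_simps)
qed

theorem corollary3p5:
  fixes p q m :: nat and kp km :: real and f :: ser
  assumes "2 \<le> p" and "2 \<le> q" and "even (p + q)"
    and "real m + 3 \<le> real (p + q) / 2"
    and "f \<in> Mplus p q m \<or> f \<in> Mminus p q m"
    and "K_homog p q kp km f"
  shows "let lam = (kp - km) * (kp + km - 2) - (real p - real q) / real (p + q) * real m * real (m + 2)
         in Xihat p q f = smul (complex_of_real lam) f \<and> (m = 0 \<and> f \<noteq> 0 \<longrightarrow> lam = 0)"
proof -
  have "p + q \<noteq> 0"
    using assms(1) by simp
  then have "Xihat p q f = smul (complex_of_real
      ((kp - km) * (kp + km - 2) - (real p - real q) / real (p + q) * real m * real (m + 2))) f"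
    using Xihat_eigen_on_M[OF assms(5,6)] by blast
  moreover have "(kp - km) * (kp + km - 2) = 0" if "m = 0" and "f \<noteq> 0"
    using K_type_weight_zero assms(5,6) that by blast
  ultimately show ?thesis
    by (simp add: Let_def)
qed

end
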